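(* Let $q\ge 7$ be a prime power and $\mathcal{K}$ a set of $q(q-3)$ points in $\mathrm{PG}(2,q)$. Then there exists a line $L$ with $|L\cap\mathcal{K}|\notin\{0,q-3,q-2\}$.
   Context: $\mathrm{PG}(2,q)$ is the projective plane of $\mathbb{F}_q^3$; points are $1$-dimensional and lines $2$-dimensional subspaces. *)

theory Defs
  imports "HOL-Analysis.Finite_Cartesian_Product"
begin

text \<open>PG(2,F) for a field F: points are 1-dimensional subspaces of F^3,
lines are 2-dimensional subspaces of F^3 (both represented as sets of vectors).\<close>

definition pg_point :: "('a::field ^ 3) set \<Rightarrow> bool" where
  "pg_point P \<longleftrightarrow> (\<exists>v. v \<noteq> 0 \<and> P = range (\<lambda>c. c *s v))"

definition pg_line :: "('a::field ^ 3) set \<Rightarrow> bool" where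
  "pg_line S \<longleftrightarrow> (\<exists>u v. (\<forall>a b. a *s u + b *s v = 0 \<longrightarrow> a = 0 \<and> b = 0) \<and>
      S = {a *s u + b *s v | a b. True})"

definition points_on :: "('a::field ^ 3) set \<Rightarrow> ('a ^ 3) set set" where
  "points_on S = {P. pg_point P \<and> P \<subseteq> S}"

end

theory Submission
  imports Defs
begin

text \<open>Suppose every line met \<open>K\<close> in \<open>0\<close>, \<open>q - 3\<close> or \<open>q - 2\<close> points. Counting the points of \<open>K\<close>
  on the \<open>q + 1\<close> lines through a point of \<open>K\<close> shows that exactly three \<open>(q - 2)\<close>-secants pass
  through it; the same count through a point off \<open>K\<close> lying on a \<open>(q - 2)\<close>-secant gives exactly
  \<open>q - 3\<close> of them. Double counting incidences then yields \<open>3 |K| = (q - 2) t\<close> for the number \<open>t\<close>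
  of \<open>(q - 2)\<close>-secants, while counting them by their intersection with one fixed \<open>(q - 2)\<close>-secant
  gives \<open>t = 1 + 2 (q - 2) + 3 (q - 4)\<close>. Together these force \<open>q = 5\<close>.\<close>

subsection \<open>Points and lines as subspaces\<close>

definition ray :: "'a::field ^ 3 \<Rightarrow> ('a ^ 3) set" where
  "ray v = range (\<lambda>c. c *s v)"

definition span2 :: "'a::field ^ 3 \<Rightarrow> 'a ^ 3 \<Rightarrow> ('a ^ 3) set" where
  "span2 u v = {a *s u + b *s v | a b. True}"

definition indep2 :: "'a::field ^ 3 \<Rightarrow> 'a ^ 3 \<Rightarrow> bool" where
  "indep2 u v \<longleftrightarrow> (\<forall>a b. a *s u + b *s v = 0 \<longrightarrow> a = 0 \<and> b = 0)"

lemma pg_point_iff_ray: "pg_point P \<longleftrightarrow> (\<exists>v. v \<noteq> 0 \<and> P = ray v)"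
  unfolding pg_point_def ray_def by simp

lemma pg_pointE:
  assumes "pg_point P"
  obtains v where "v \<noteq> 0" "P = ray v"
  using assms unfolding pg_point_iff_ray by blast

lemma pg_point_ray: "v \<noteq> 0 \<Longrightarrow> pg_point (ray v)"
  unfolding pg_point_iff_ray by blast

lemma pg_line_iff_span2: "pg_line S \<longleftrightarrow> (\<exists>u v. indep2 u v \<and> S = span2 u v)"
  unfolding pg_line_def indep2_def span2_def by simp

lemma CARD_field_ge_2: "CARD('a::{finite,field}) \<ge> 2"
proof -
  have "card {0::'a, 1} = 2" by simp
  moreover have "card {0::'a, 1} \<le> CARD('a)" by (rule card_mono) auto
  ultimately show ?thesis by simp
qed

lemma ray_self: "v \<in> ray v"
  unfolding ray_def by (metis rangeI vector_smult_lid)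

lemma zero_in_ray: "0 \<in> ray v"
  unfolding ray_def by (metis rangeI vector_smult_lzero)

lemma card_ray:
  fixes v :: "'a::{finite,field} ^ 3"
  assumes "v \<noteq> 0"
  shows "card (ray v) = CARD('a)"
proof -
  have "inj (\<lambda>c::'a. c *s v)" using assms by (auto intro: injI)
  then show ?thesis unfolding ray_def by (simp add: card_image)
qed

lemma ray_eq_ray:
  fixes v x :: "'a::field ^ 3"
  assumes "x \<in> ray v" "x \<noteq> 0"
  shows "ray x = ray v"
proof -
  obtain c where x: "x = c *s v" using assms(1) unfolding ray_def by blast
  have c: "c \<noteq> 0" using x assms(2) by auto
  have "d *s v = (d / c) *s (c *s v)" for d using c by (simp add: vector_smult_assoc)
  then have "range (\<lambda>d. d *s v) \<subseteq> range (\<lambda>d. d *s (c *s v))" by blast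
  then show ?thesis unfolding ray_def x by (auto simp: vector_smult_assoc)
qed

lemma indep2_if_rays_differ:
  fixes v w :: "'a::field ^ 3"
  assumes "v \<noteq> 0" "w \<noteq> 0" "ray v \<noteq> ray w"
  shows "indep2 v w"
  unfolding indep2_def
proof (intro allI impI)
  fix a b assume ab: "a *s v + b *s w = 0"
  show "a = 0 \<and> b = 0"
  proof (rule ccontr)
    assume "\<not> (a = 0 \<and> b = 0)"
    then have "b \<noteq> 0" using ab assms(1) by auto
    with ab have "w = (- a / b) *s v"
      by (metis (no_types, lifting) add.commute divide_inverse_commute eq_neg_iff_add_eq_0
          mult.commute nonzero_eq_divide_eq vector_mul_lcancel vector_smult_assoc vector_smult_lneg)
    then have "ray w = ray v" using ray_eq_ray assms unfolding ray_def by blast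
    with assms(3) show False by simp
  qed
qed

lemma card_span2:
  fixes u v :: "'a::{finite,field} ^ 3"
  assumes "indep2 u v"
  shows "card (span2 u v) = CARD('a) * CARD('a)"
proof -
  have "span2 u v = (\<lambda>(a, b). a *s u + b *s v) ` UNIV" unfolding span2_def by auto
  moreover have "inj (\<lambda>(a::'a, b::'a). a *s u + b *s v)"
  proof (rule injI, clarsimp)
    fix a b a' b' :: 'a
    assume "a *s u + b *s v = a' *s u + b' *s v"
    then have "(a - a') *s u + (b - b') *s v = 0"
      by (simp add: vector_sub_rdistrib algebra_simps)
    then show "a = a' \<and> b = b'" using assms unfolding indep2_def by force
  qed
  ultimately show ?thesis by (simp add: card_image card_cartesian_product flip: UNIV_Times_UNIV)
qed

lemma pg_line_lincomb:
  assumes "pg_line L" "x \<in> L" "y \<in> L"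
  shows "a *s x + b *s y \<in> L"
proof -
  obtain u v where L: "L = span2 u v" using assms(1) pg_line_iff_span2 by blast
  obtain a1 b1 where x: "x = a1 *s u + b1 *s v" using assms(2) L unfolding span2_def by blast
  obtain a2 b2 where y: "y = a2 *s u + b2 *s v" using assms(3) L unfolding span2_def by blast
  have "a *s x + b *s y = (a * a1 + b * a2) *s u + (a * b1 + b * b2) *s v"
    unfolding x y by (simp add: vec_eq_iff algebra_simps)
  then show ?thesis unfolding L span2_def by blast
qed

lemma pg_line_zero: "pg_line L \<Longrightarrow> 0 \<in> L"
  using pg_line_lincomb[of L _ _ 0 0] unfolding pg_line_def by fastforce

lemma pg_line_smult: "pg_line L \<Longrightarrow> x \<in> L \<Longrightarrow> c *s x \<in> L"
  using pg_line_lincomb[of L x x c 0] by simp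

lemma pg_line_diff: "pg_line L \<Longrightarrow> x \<in> L \<Longrightarrow> y \<in> L \<Longrightarrow> x - y \<in> L"
  using pg_line_lincomb[of L x y 1 "-1"] by (simp add: vector_smult_lneg)

lemma ray_subset_pg_line: "pg_line L \<Longrightarrow> v \<in> L \<Longrightarrow> ray v \<subseteq> L"
  unfolding ray_def using pg_line_smult by blast

lemma card_pg_line:
  fixes L :: "('a::{finite,field} ^ 3) set"
  shows "pg_line L \<Longrightarrow> card L = CARD('a) * CARD('a)"
  unfolding pg_line_iff_span2 using card_span2 by blast

lemma pg_line_eq_span2:
  fixes L :: "('a::{finite,field} ^ 3) set"
  assumes "pg_line L" "indep2 u v" "u \<in> L" "v \<in> L"
  shows "L = span2 u v"
proof (rule sym, rule card_subset_eq)
  show "span2 u v \<subseteq> L" unfolding span2_def using assms pg_line_lincomb by blast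
  show "card (span2 u v) = card L" using card_span2[OF assms(2)] card_pg_line[OF assms(1)] by simp
qed simp

text \<open>Two lines of \<open>F\<^sup>3\<close> cannot meet only in \<open>0\<close>: otherwise \<open>(x, y) \<mapsto> x + y\<close> would embed
  \<open>L\<^sub>1 \<times> L\<^sub>2\<close>, of size \<open>q\<^sup>4\<close>, into \<open>F\<^sup>3\<close>.\<close>

lemma pg_lines_meet:
  fixes L1 L2 :: "('a::{finite,field} ^ 3) set"
  assumes "pg_line L1" "pg_line L2"
  obtains w where "w \<noteq> 0" "w \<in> L1" "w \<in> L2"
proof (rule ccontr)
  assume "\<not> thesis"
  with that have trivial_meet: "w \<in> L1 \<Longrightarrow> w \<in> L2 \<Longrightarrow> w = 0" for w by blast
  have "inj_on (\<lambda>(x, y). x + y) (L1 \<times> L2)"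
  proof (rule inj_onI, clarsimp)
    fix x y x' y' assume xy: "x \<in> L1" "y \<in> L2" "x' \<in> L1" "y' \<in> L2" "x + y = x' + y'"
    have "x - x' = y' - y" using xy(5) by (simp add: algebra_simps)
    moreover have "x - x' \<in> L1" "y' - y \<in> L2" using pg_line_diff assms xy by blast+
    ultimately show "x = x' \<and> y = y'" using trivial_meet xy(5) by force
  qed
  then have "card (L1 \<times> L2) \<le> card (UNIV :: ('a ^ 3) set)"
    by (rule card_inj_on_le) auto
  then have "CARD('a) ^ 3 * CARD('a) \<le> CARD('a) ^ 3 * 1"
    by (simp add: card_cartesian_product card_pg_line[OF assms(1)] card_pg_line[OF assms(2)]
        power3_eq_cube ac_simps)
  then show False using CARD_field_ge_2[where 'a='a] by simp
qed

subsection \<open>Incidence counts\<close>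

definition lines_through :: "('a::field ^ 3) set \<Rightarrow> ('a ^ 3) set set" where
  "lines_through P = {L. pg_line L \<and> P \<subseteq> L}"

definition secants :: "('a::field ^ 3) set set \<Rightarrow> nat \<Rightarrow> ('a ^ 3) set set" where
  "secants K n = {L. pg_line L \<and> card (points_on L \<inter> K) = n}"

lemma card_points_in_cone:
  fixes S :: "('a::{finite,field} ^ 3) set"
  assumes "0 \<in> S" "\<And>x c. x \<in> S \<Longrightarrow> c *s x \<in> S"
  shows "card {P. pg_point P \<and> P \<subseteq> S} * (CARD('a) - 1) + 1 = card S"
proof -
  let ?A = "{P. pg_point P \<and> P \<subseteq> S}"
  have "card {x\<in>S - {0}. x \<in> P} = CARD('a) - 1" if "P \<in> ?A" for P
  proof -
    have "pg_point P" using that by simp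
    then obtain v where v: "v \<noteq> 0" "P = ray v" by (rule pg_pointE)
    then have "{x\<in>S - {0}. x \<in> P} = ray v - {0}" using that by blast
    then show ?thesis using card_ray[OF v(1)] zero_in_ray[of v] by (simp add: card_Diff_singleton)
  qed
  then have "(\<Sum>P\<in>?A. card {x\<in>S - {0}. x \<in> P}) = card ?A * (CARD('a) - 1)" by simp
  moreover have "(\<Sum>P\<in>?A. card {x\<in>S - {0}. x \<in> P}) = 1 * card (S - {0})"
  proof (rule sum_multicount[OF finite finite, rule_format])
    fix x assume x: "x \<in> S - {0}"
    then have "ray x \<subseteq> S" "pg_point (ray x)"
      using assms(2) pg_point_ray unfolding ray_def by auto
    then have "ray x \<in> ?A" by simp
    moreover have "P = ray x" if P: "P \<in> ?A" "x \<in> P" for P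
    proof -
      have "pg_point P" using P(1) by simp
      then obtain v where "P = ray v" by (rule pg_pointE)
      then show ?thesis using ray_eq_ray[of x v] P(2) x by simp
    qed
    ultimately have "{P\<in>?A. x \<in> P} = {ray x}" using ray_self by blast
    then show "card {P\<in>?A. x \<in> P} = 1" by simp
  qed
  moreover have "card S > 0" using assms(1) by (auto simp: card_gt_0_iff)
  ultimately show ?thesis using assms(1) by (simp add: card_Diff_singleton)
qed

lemma card_pg_points: "card {P::('a::{finite,field} ^ 3) set. pg_point P} = CARD('a)^2 + CARD('a) + 1"
proof -
  obtain p where q: "CARD('a) = Suc p" using not0_implies_Suc[of "CARD('a)"] by auto
  have "card {P::('a ^ 3) set. pg_point P} * p + 1 = Suc p ^ 3"
    using card_points_in_cone[of "UNIV :: ('a ^ 3) set"] q by simp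
  also have "\<dots> = (Suc p ^ 2 + Suc p + 1) * p + 1" by (simp add: power2_eq_square power3_eq_cube algebra_simps)
  finally have "card {P::('a ^ 3) set. pg_point P} * p = (Suc p ^ 2 + Suc p + 1) * p" by simp
  then show ?thesis using q CARD_field_ge_2[where 'a='a] by (subst (asm) mult_cancel2) simp
qed

lemma card_points_on:
  fixes L :: "('a::{finite,field} ^ 3) set"
  assumes "pg_line L"
  shows "card (points_on L) = CARD('a) + 1"
proof -
  obtain p where q: "CARD('a) = Suc p" using not0_implies_Suc[of "CARD('a)"] by auto
  have "card (points_on L) * p + 1 = Suc p * Suc p"
    using card_points_in_cone[of L] pg_line_zero[OF assms] pg_line_smult[OF assms] card_pg_line[OF assms] q
    unfolding points_on_def by simp
  also have "\<dots> = (Suc p + 1) * p + 1" by simp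
  finally have "card (points_on L) * p = (Suc p + 1) * p" by simp
  then show ?thesis using q CARD_field_ge_2[where 'a='a] by (subst (asm) mult_cancel2) simp
qed

lemma pg_join_unique:
  fixes P Q :: "('a::{finite,field} ^ 3) set"
  assumes "pg_point P" "pg_point Q" "P \<noteq> Q"
  shows "\<exists>!L. pg_line L \<and> P \<subseteq> L \<and> Q \<subseteq> L"
proof -
  obtain u where u: "u \<noteq> 0" "P = ray u" using assms(1) by (rule pg_pointE)
  obtain v where v: "v \<noteq> 0" "Q = ray v" using assms(2) by (rule pg_pointE)
  have indep: "indep2 u v" using indep2_if_rays_differ u v assms(3) by blast
  have "u = 1 *s u + 0 *s v" "v = 0 *s u + 1 *s v" by simp_all
  then have "u \<in> span2 u v" "v \<in> span2 u v" unfolding span2_def by blast+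
  moreover have "pg_line (span2 u v)" unfolding pg_line_iff_span2 using indep by blast
  ultimately show ?thesis
  proof (intro ex1I[of _ "span2 u v"] conjI)
    fix L assume "pg_line L \<and> P \<subseteq> L \<and> Q \<subseteq> L"
    then show "L = span2 u v" using pg_line_eq_span2[OF _ indep] u v ray_self by blast
  qed (use u v ray_subset_pg_line in blast)+
qed

lemma pg_meet_unique:
  fixes L1 L2 :: "('a::{finite,field} ^ 3) set"
  assumes "pg_line L1" "pg_line L2" "L1 \<noteq> L2"
  shows "\<exists>!P. pg_point P \<and> P \<subseteq> L1 \<and> P \<subseteq> L2"
proof (rule ex_ex1I)
  obtain w where "w \<noteq> 0" "w \<in> L1" "w \<in> L2" using pg_lines_meet[OF assms(1,2)] .
  then show "\<exists>P. pg_point P \<and> P \<subseteq> L1 \<and> P \<subseteq> L2"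
    using assms ray_subset_pg_line pg_point_ray by blast
next
  fix P Q assume "pg_point P \<and> P \<subseteq> L1 \<and> P \<subseteq> L2" "pg_point Q \<and> Q \<subseteq> L1 \<and> Q \<subseteq> L2"
  then show "P = Q" using pg_join_unique[of P Q] assms by blast
qed

lemma sum_card_points_on_lines_through:
  fixes P :: "('a::{finite,field} ^ 3) set"
  assumes "pg_point P" "\<forall>Q\<in>X. pg_point Q"
  shows "(\<Sum>L\<in>lines_through P. card (points_on L \<inter> X - {P})) = card (X - {P})"
proof -
  have "(\<Sum>L\<in>lines_through P. card {Q\<in>X - {P}. Q \<subseteq> L}) = 1 * card (X - {P})"
  proof (rule sum_multicount[OF finite finite, rule_format])
    fix Q assume "Q \<in> X - {P}"
    then have "pg_point Q" "Q \<noteq> P" using assms(2) by auto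
    then have "\<exists>!L. L \<in> lines_through P \<and> Q \<subseteq> L"
      using pg_join_unique[OF assms(1)] unfolding lines_through_def by simp
    then obtain L where "{L \<in> lines_through P. Q \<subseteq> L} = {L}" by blast
    then show "card {L \<in> lines_through P. Q \<subseteq> L} = 1" by simp
  qed
  moreover have "{Q\<in>X - {P}. Q \<subseteq> L} = points_on L \<inter> X - {P}" for L
    using assms(2) unfolding points_on_def by blast
  ultimately show ?thesis by simp
qed

lemma card_lines_through:
  fixes P :: "('a::{finite,field} ^ 3) set"
  assumes "pg_point P"
  shows "card (lines_through P) = CARD('a) + 1"
proof -
  let ?X = "{Q::('a ^ 3) set. pg_point Q}"
  have "card (points_on L \<inter> ?X - {P}) = CARD('a)" if "L \<in> lines_through P" for L
  proof -
    have "points_on L \<inter> ?X = points_on L" "P \<in> points_on L"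
      using that assms unfolding points_on_def lines_through_def by auto
    then show ?thesis using card_points_on[of L] that unfolding lines_through_def
      by (simp add: card_Diff_singleton)
  qed
  then have "card (lines_through P) * CARD('a) = card (?X - {P})"
    using sum_card_points_on_lines_through[OF assms, of ?X] by simp
  also have "\<dots> = (CARD('a) + 1) * CARD('a)"
    using card_pg_points[where 'a='a] assms by (simp add: card_Diff_singleton power2_eq_square)
  finally have "card (lines_through P) * CARD('a) = (CARD('a) + 1) * CARD('a)" .
  then show ?thesis by (subst (asm) mult_cancel2) simp
qed


subsection \<open>Sets with few intersection numbers\<close>

lemma sum_card_lines_through_eq_sum_card_points_on:
  fixes K :: "('a::{finite,field} ^ 3) set set"
  assumes "\<forall>P\<in>K. pg_point P" "\<forall>L\<in>S. pg_line L"
  shows "(\<Sum>P\<in>K. card (lines_through P \<inter> S)) = (\<Sum>L\<in>S. card (points_on L \<inter> K))"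
proof -
  have "lines_through P \<inter> S = {L\<in>S. P \<subseteq> L}" for P
    using assms(2) unfolding lines_through_def by blast
  moreover have "points_on L \<inter> K = {P\<in>K. P \<subseteq> L}" for L
    using assms(1) unfolding points_on_def by blast
  ultimately show ?thesis
    using sum_multicount_gen[where s=K and t=S and R="\<lambda>P L. P \<subseteq> L", OF finite finite] by simp
qed

lemma card_secants_by_meeting_line:
  fixes M :: "('a::{finite,field} ^ 3) set"
  assumes "M \<in> S" "\<forall>L\<in>S. pg_line L"
    and "\<And>Q. Q \<in> points_on M \<inter> K \<Longrightarrow> card (lines_through Q \<inter> S) = a"
    and "\<And>Q. Q \<in> points_on M - K \<Longrightarrow> card (lines_through Q \<inter> S) = b"
  shows "card S = 1 + card (points_on M \<inter> K) * (a - 1)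
                    + (CARD('a) + 1 - card (points_on M \<inter> K)) * (b - 1)"
proof -
  have "card {Q\<in>points_on M. Q \<subseteq> L} = 1" if "L \<in> S - {M}" for L
  proof -
    have "pg_line M" "pg_line L" "M \<noteq> L" using assms(1,2) that by auto
    then have "\<exists>!Q. Q \<in> points_on M \<and> Q \<subseteq> L"
      using pg_meet_unique unfolding points_on_def by simp
    then obtain Q where "{Q\<in>points_on M. Q \<subseteq> L} = {Q}" by blast
    then show ?thesis by simp
  qed
  then have "(\<Sum>Q\<in>points_on M. card {L\<in>S - {M}. Q \<subseteq> L}) = 1 * card (S - {M})"
    by (intro sum_multicount[OF finite finite]) blast
  moreover have "card {L\<in>S - {M}. Q \<subseteq> L} = card (lines_through Q \<inter> S) - 1"
    if "Q \<in> points_on M" for Q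
  proof -
    have "{L\<in>S - {M}. Q \<subseteq> L} = lines_through Q \<inter> S - {M}" "M \<in> lines_through Q \<inter> S"
      using assms(1,2) that unfolding lines_through_def points_on_def by auto
    then show ?thesis by (simp add: card_Diff_singleton)
  qed
  ultimately have "card S - 1 = (\<Sum>Q\<in>points_on M. card (lines_through Q \<inter> S) - 1)"
    using assms(1) by (simp add: card_Diff_singleton)
  also have "\<dots> = (\<Sum>Q\<in>points_on M. if Q \<in> K then a - 1 else b - 1)"
    using assms(3,4) by (intro sum.cong) auto
  also have "\<dots> = card (points_on M \<inter> K) * (a - 1) + card (points_on M - K) * (b - 1)"
    by (simp add: sum.If_cases Diff_eq)
  also have "card (points_on M - K) = CARD('a) + 1 - card (points_on M \<inter> K)"
    using card_points_on[of M] assms(1,2) by (simp add: card_Diff_subset_Int)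
  finally have "card S - 1 = card (points_on M \<inter> K) * (a - 1)
                             + (CARD('a) + 1 - card (points_on M \<inter> K)) * (b - 1)" .
  moreover have "card S > 0" using assms(1) by (auto simp: card_gt_0_iff)
  ultimately show ?thesis by linarith
qed

lemma card_lines_through_point_in_set:
  fixes K :: "('a::{finite,field} ^ 3) set set"
  assumes "\<forall>Q\<in>K. pg_point Q" "P \<in> K" "k \<ge> 1"
    and "\<And>L. L \<in> lines_through P \<Longrightarrow> card (points_on L \<inter> K) \<in> {k, Suc k}"
  shows "card K = (CARD('a) + 1) * (k - 1) + card (lines_through P \<inter> secants K (Suc k)) + 1"
proof -
  have P: "pg_point P" using assms(1,2) by blast
  have "card (points_on L \<inter> K - {P}) = (k - 1) + (if L \<in> secants K (Suc k) then 1 else 0)"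
    if L: "L \<in> lines_through P" for L
  proof -
    have "P \<in> points_on L \<inter> K" using L P assms(2) unfolding lines_through_def points_on_def by simp
    then show ?thesis using assms(3) assms(4)[OF L] L
      unfolding secants_def lines_through_def by (auto simp: card_Diff_singleton)
  qed
  then have "card (K - {P}) = (\<Sum>L\<in>lines_through P. (k - 1) + (if L \<in> secants K (Suc k) then 1 else 0))"
    using sum_card_points_on_lines_through[OF P assms(1)] by simp
  also have "\<dots> = (CARD('a) + 1) * (k - 1) + card (lines_through P \<inter> secants K (Suc k))"
    by (simp add: sum.distrib card_lines_through[OF P] sum.If_cases)
  moreover have "card K > 0" using assms(2) by (auto simp: card_gt_0_iff)
  ultimately show ?thesis using assms(2) by (simp add: card_Diff_singleton)
qed

lemma card_lines_through_point_off_set: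
  fixes K :: "('a::{finite,field} ^ 3) set set"
  assumes "\<forall>P\<in>K. pg_point P" "pg_point Q" "Q \<notin> K"
    and "\<And>L. L \<in> lines_through Q \<Longrightarrow> card (points_on L \<inter> K) \<in> {0, k, Suc k}"
  shows "card K = k * card (lines_through Q \<inter> secants K k)
                  + Suc k * card (lines_through Q \<inter> secants K (Suc k))"
proof -
  have "card (points_on L \<inter> K - {Q}) =
      (if L \<in> secants K k then k else 0) + (if L \<in> secants K (Suc k) then Suc k else 0)"
    if L: "L \<in> lines_through Q" for L
    using assms(3) assms(4)[OF L] L unfolding secants_def lines_through_def by auto
  then have "card K = (\<Sum>L\<in>lines_through Q.
      (if L \<in> secants K k then k else 0) + (if L \<in> secants K (Suc k) then Suc k else 0))"
    using sum_card_points_on_lines_through[OF assms(2,1)] assms(3) by simp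
  then show ?thesis by (simp add: sum.distrib sum.If_cases)
qed

lemma secant_count_eq:
  fixes k x y :: nat
  assumes "k \<ge> 2" "k * x + Suc k * y = (k + 3) * k" "y \<noteq> 0"
  shows "y = k"
proof -
  define j :: int where "j = int k + 3 - x - y"
  have y: "int y = int k * j" using assms(2) unfolding j_def
    by (simp add: algebra_simps flip: of_nat_mult of_nat_add)
  have "j \<ge> 1"
  proof (rule ccontr)
    assume "\<not> j \<ge> 1"
    then have "int k * j \<le> 0" by (simp add: mult_nonneg_nonpos)
    then show False using y assms(3) by linarith
  qed
  moreover have "j \<le> 1"
  proof (rule ccontr)
    assume "\<not> j \<le> 1"
    then have "int k * 2 \<le> int y" using y by (simp add: mult_left_mono)
    then show False using assms(1) \<open>\<not> j \<le> 1\<close> unfolding j_def by linarith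
  qed
  ultimately show ?thesis using y by simp
qed

lemma long_secants_through_point_in_set:
  fixes K :: "('a::{finite,field} ^ 3) set set"
  assumes "\<forall>Q\<in>K. pg_point Q" "card K = CARD('a) * (CARD('a) - 3)" "CARD('a) \<ge> 4" "P \<in> K"
    and "\<And>L. L \<in> lines_through P \<Longrightarrow> card (points_on L \<inter> K) \<in> {0, CARD('a) - 3, CARD('a) - 2}"
  shows "card (lines_through P \<inter> secants K (CARD('a) - 2)) = 3"
proof -
  obtain r where q: "CARD('a) = r + 4" using le_Suc_ex[OF assms(3)] by (auto simp: add.commute)
  have "card (points_on L \<inter> K) \<in> {CARD('a) - 3, Suc (CARD('a) - 3)}"
    if L: "L \<in> lines_through P" for L
  proof -
    have "P \<in> points_on L \<inter> K"
      using L assms(1,4) unfolding lines_through_def points_on_def by auto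
    then have "card (points_on L \<inter> K) \<noteq> 0" by (auto simp: card_eq_0_iff)
    then show ?thesis using assms(5)[OF L] q by auto
  qed
  from card_lines_through_point_in_set[OF assms(1,4), of "CARD('a) - 3"] this
  show ?thesis using assms(2) q by (simp add: algebra_simps)
qed

lemma long_secants_through_point_off_set:
  fixes K :: "('a::{finite,field} ^ 3) set set"
  assumes "\<forall>P\<in>K. pg_point P" "card K = CARD('a) * (CARD('a) - 3)" "CARD('a) \<ge> 5"
    and "pg_point Q" "Q \<notin> K" "lines_through Q \<inter> secants K (CARD('a) - 2) \<noteq> {}"
    and "\<And>L. L \<in> lines_through Q \<Longrightarrow> card (points_on L \<inter> K) \<in> {0, CARD('a) - 3, CARD('a) - 2}"
  shows "card (lines_through Q \<inter> secants K (CARD('a) - 2)) = CARD('a) - 3"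
proof -
  obtain r where q: "CARD('a) = r + 5" using le_Suc_ex[OF assms(3)] by (auto simp: add.commute)
  then have k: "CARD('a) - 3 = r + 2" "CARD('a) - 2 = Suc (r + 2)" by simp_all
  let ?X = "card (lines_through Q \<inter> secants K (r + 2))"
  let ?Y = "card (lines_through Q \<inter> secants K (Suc (r + 2)))"
  have "card K = (r + 2) * ?X + Suc (r + 2) * ?Y"
  proof (rule card_lines_through_point_off_set[OF assms(1,4,5)])
    fix L assume "L \<in> lines_through Q"
    then show "card (points_on L \<inter> K) \<in> {0, r + 2, Suc (r + 2)}"
      using assms(7) unfolding k by simp
  qed
  then have count: "(r + 2) * ?X + Suc (r + 2) * ?Y = (r + 2 + 3) * (r + 2)"
    using assms(2) q by (simp add: algebra_simps)
  have "lines_through Q \<inter> secants K (Suc (r + 2)) \<noteq> {}"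
    using assms(6) unfolding k .
  then have "?Y \<noteq> 0" by (simp add: card_eq_0_iff)
  with count have "?Y = r + 2" by (intro secant_count_eq[of "r + 2" ?X]) simp_all
  then show ?thesis unfolding k .
qed

theorem mainTheorem16:
  fixes K :: "('a::{finite,field} ^ 3) set set"
  assumes "CARD('a) \<ge> 7"
    and "\<forall>P\<in>K. pg_point P"
    and "card K = CARD('a) * (CARD('a) - 3)"
  shows "\<exists>L. pg_line L \<and>
           card (points_on L \<inter> K) \<notin> {0, CARD('a) - 3, CARD('a) - 2}"
proof (rule ccontr)
  define q where "q = CARD('a)"
  define S where "S = secants K (q - 2)"
  assume "\<not> ?thesis"
  then have types: "\<And>L. L \<in> lines_through P \<Longrightarrow> card (points_on L \<inter> K) \<in> {0, q - 3, q - 2}"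
    for P unfolding q_def lines_through_def by simp
  have lines: "\<forall>L\<in>S. pg_line L" unfolding S_def secants_def by simp
  have on_K: "card (lines_through P \<inter> S) = 3" if "P \<in> K" for P
    using long_secants_through_point_in_set[OF assms(2,3) _ that] types assms(1)
    unfolding q_def S_def by simp
  have off_K: "card (lines_through Q \<inter> S) = q - 3" if "Q \<in> points_on M - K" "M \<in> S" for Q M
  proof -
    have "pg_point Q" "Q \<notin> K" "lines_through Q \<inter> S \<noteq> {}"
      using that unfolding S_def secants_def lines_through_def points_on_def by auto
    then show ?thesis
      using long_secants_through_point_off_set[OF assms(2,3)] types assms(1)
      unfolding q_def S_def by simp
  qed
  obtain P where "P \<in> K" using assms(1,3) by fastforce
  then have "lines_through P \<inter> S \<noteq> {}" using on_K by fastforce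
  then obtain M where M: "M \<in> S" by blast
  have "3 * card K = card S * (q - 2)"
    using sum_card_lines_through_eq_sum_card_points_on[OF assms(2) lines] on_K
    unfolding S_def secants_def by simp
  moreover have "card S = 1 + (q - 2) * 2 + 3 * (q - 4)"
    using card_secants_by_meeting_line[where K=K, OF M lines on_K off_K[OF _ M]] M assms(1)
    unfolding S_def secants_def q_def by (simp add: mult.commute)
  moreover obtain r where "q = r + 7" using le_Suc_ex[OF assms(1)] unfolding q_def by (auto simp: add.commute)
  ultimately show False using assms(3) unfolding q_def[symmetric] by (simp add: algebra_simps)
qed

end
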